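(* Let $\ell\ge2$, let $A_1,\dots,A_\ell$ be pairwise disjoint finite nonempty sets, $V=A_1\cup\dots\cup A_\ell$, and $\mathcal A=\{A_1,\dots,A_\ell\}$. Let $\mathcal S$ be a family of $\ell$-element subsets of $V$ with $|S\cap A_i|=1$ for all $S\in\mathcal S$ and all $i$, such that $|S\setminus T|$ is odd for all distinct $S,T\in\mathcal S$. For $X\subseteq V$ let $\vec X\in\mathbb F_2^V$ be its characteristic vector. Suppose $|\mathcal S|$ is odd and the vectors $\{\vec X: X\in\mathcal S\cup\mathcal A\}$ satisfy a nontrivial linear dependency $\sum_{X\in\mathcal S\cup\mathcal A}\alpha(X)\vec X=0$ with $\alpha(X)\in\mathbb F_2$ not all zero. Then this dependency is unique and $\alpha(X)=1$ for every $X\in\mathcal S\cup\mathcal A$.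
   Context: $\mathbb F_2$ is the two-element field. *)

theory Defs
  imports Main "HOL-Library.Z2"
begin

text \<open>The two-element field F_2 is the type bit from HOL-Library.Z2.
  The characteristic vector of X, viewed as a function on the ground set
  (only its values on V matter, since vectors live in F_2^V).\<close>

definition charvec :: "'a set \<Rightarrow> 'a \<Rightarrow> bit" where
  "charvec X v = (if v \<in> X then 1 else 0)"

end

theory Submission
  imports Defs
begin

(* Summing the dependency over the points of a set Y gives
   \<Sum>X \<alpha>(X) |Y \<inter> X| = 0 in F_2.  For Y a transversal T we have |T \<inter> A_i| = 1,
   |T \<inter> T| = l and |T \<inter> X| = l - |X - T| = l + 1 for the other transversals X,
   so \<alpha>(T) equals an expression not depending on T: \<alpha> is constant, say c, on \<S>.
   If c = 0, the equation at a point of A_i, which lies in no other part, gives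
   \<alpha>(A_i) = 0.  If c = 1, taking Y = A_i gives |\<S>| + \<alpha>(A_i) |A_i| = 0, and
   |\<S>| is odd, so \<alpha>(A_i) = 1.  Hence all coefficients equal c, and c = 1 since
   the dependency is nontrivial. *)

declare add_bit_eq_xor [simp del] mult_bit_eq_and [simp del]

lemma of_nat_bit_eq_of_bool: "(of_nat n :: bit) = of_bool (odd n)"
  by (induction n) auto

lemma sum_charvec: "finite Y \<Longrightarrow> (\<Sum>v\<in>Y. charvec X v) = of_nat (card (Y \<inter> X))"
  unfolding charvec_def by (simp add: sum.If_cases)

lemma sum_card_Int_eq_0_if_dependency:
  fixes \<alpha> :: "'a set \<Rightarrow> bit"
  assumes "finite Y" and "\<forall>v\<in>Y. (\<Sum>X\<in>\<F>. \<alpha> X * charvec X v) = 0"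
  shows "(\<Sum>X\<in>\<F>. \<alpha> X * of_nat (card (Y \<inter> X))) = 0"
proof -
  have "(\<Sum>X\<in>\<F>. \<alpha> X * of_nat (card (Y \<inter> X))) = (\<Sum>X\<in>\<F>. \<alpha> X * (\<Sum>v\<in>Y. charvec X v))"
    using assms(1) by (simp add: sum_charvec)
  also have "\<dots> = (\<Sum>v\<in>Y. \<Sum>X\<in>\<F>. \<alpha> X * charvec X v)"
    by (simp add: sum_distrib_left sum.swap[of _ \<F>])
  also have "\<dots> = 0"
    using assms(2) by simp
  finally show ?thesis .
qed

lemma of_nat_card_Int_if_odd_card_Diff:
  assumes "finite X" and "odd (card (X - T))"
  shows "(of_nat (card (T \<inter> X)) :: bit) = of_nat (card X) + 1"
proof -
  have "card X = card (T \<inter> X) + card (X - T)"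
    using card_Int_Diff[OF assms(1), of T] by (simp add: Int_commute)
  with assms(2) have "odd (card (T \<inter> X)) \<longleftrightarrow> even (card X)"
    by presburger
  then show ?thesis
    by (simp add: of_nat_bit_eq_of_bool)
qed

locale transversal_dependency =
  fixes \<A> \<S> :: "'a set set" and l :: nat and \<alpha> :: "'a set \<Rightarrow> bit"
  assumes finite_parts: "finite \<A>"
    and finite_part: "A \<in> \<A> \<Longrightarrow> finite A"
    and part_nonempty: "A \<in> \<A> \<Longrightarrow> A \<noteq> {}"
    and parts_disjoint: "pairwise disjnt \<A>"
    and two_parts: "2 \<le> card \<A>"
    and transversal_subset: "S \<in> \<S> \<Longrightarrow> S \<subseteq> \<Union>\<A>"
    and card_transversal: "S \<in> \<S> \<Longrightarrow> card S = l"
    and card_transversal_Int_part: "S \<in> \<S> \<Longrightarrow> A \<in> \<A> \<Longrightarrow> card (S \<inter> A) = 1"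
    and odd_card_transversal_Diff: "S \<in> \<S> \<Longrightarrow> T \<in> \<S> \<Longrightarrow> S \<noteq> T \<Longrightarrow> odd (card (S - T))"
    and odd_card_transversals: "odd (card \<S>)"
    and dependency: "v \<in> \<Union>\<A> \<Longrightarrow> (\<Sum>X\<in>\<S> \<union> \<A>. \<alpha> X * charvec X v) = 0"
begin

lemma finite_transversals: "finite \<S>"
  using odd_card_transversals card.infinite by fastforce

lemma finite_Union_parts: "finite (\<Union>\<A>)"
  using finite_parts finite_part by blast

lemma transversals_Int_parts: "\<S> \<inter> \<A> = {}"
proof (rule ccontr)
  assume "\<S> \<inter> \<A> \<noteq> {}"
  then obtain A where A: "A \<in> \<S>" "A \<in> \<A>" by blast
  have "\<not> \<A> \<subseteq> {A}"
    using two_parts card_mono[of "{A}" \<A>] by auto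
  then obtain B where B: "B \<in> \<A>" "B \<noteq> A" by blast
  then have "A \<inter> B = {}"
    using parts_disjoint A(2) by (auto simp: pairwise_def disjnt_def)
  moreover have "card (A \<inter> B) = 1"
    using card_transversal_Int_part A(1) B(1) .
  ultimately show False by simp
qed

lemma sum_parts_eq_single:
  assumes "A \<in> \<A>" and "\<And>B. B \<in> \<A> \<Longrightarrow> A \<inter> B = {} \<Longrightarrow> f B = 0"
  shows "sum f \<A> = f A"
proof -
  have "sum f \<A> = sum f {A}"
  proof (rule sum.mono_neutral_right[OF finite_parts])
    show "\<forall>B\<in>\<A> - {A}. f B = 0"
      using assms parts_disjoint by (auto simp: pairwise_def disjnt_def)
  qed (use assms(1) in simp)
  then show ?thesis by simp
qed

lemma sum_card_Int_eq_0:
  assumes "Y \<subseteq> \<Union>\<A>"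
  shows "(\<Sum>X\<in>\<S>. \<alpha> X * of_nat (card (Y \<inter> X))) + (\<Sum>X\<in>\<A>. \<alpha> X * of_nat (card (Y \<inter> X))) = 0"
proof -
  have "finite Y"
    using assms finite_Union_parts by (rule finite_subset)
  then have "(\<Sum>X\<in>\<S> \<union> \<A>. \<alpha> X * of_nat (card (Y \<inter> X))) = 0"
    using assms dependency by (intro sum_card_Int_eq_0_if_dependency) auto
  then show ?thesis
    by (simp add: sum.union_disjoint finite_transversals finite_parts transversals_Int_parts)
qed

lemma coeff_transversal_eq:
  assumes T: "T \<in> \<S>"
  shows "\<alpha> T = (\<Sum>X\<in>\<S>. \<alpha> X * (of_nat l + 1)) + (\<Sum>A\<in>\<A>. \<alpha> A)"
proof -
  have "(\<Sum>X\<in>\<S>. \<alpha> X * of_nat (card (T \<inter> X)))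
      = (\<Sum>X\<in>\<S>. \<alpha> X * (of_nat l + 1) + (if X = T then \<alpha> X else 0))"
  proof (rule sum.cong)
    fix X assume X: "X \<in> \<S>"
    show "\<alpha> X * of_nat (card (T \<inter> X)) = \<alpha> X * (of_nat l + 1) + (if X = T then \<alpha> X else 0)"
    proof (cases "X = T")
      case True
      then show ?thesis
        using T card_transversal by (simp add: algebra_simps)
    next
      case False
      have "finite X"
        using transversal_subset[OF X] finite_Union_parts by (rule finite_subset)
      then have "(of_nat (card (T \<inter> X)) :: bit) = of_nat l + 1"
        using X T False card_transversal odd_card_transversal_Diff of_nat_card_Int_if_odd_card_Diff
        by metis
      with False show ?thesis by simp
    qed
  qed simp
  also have "\<dots> = (\<Sum>X\<in>\<S>. \<alpha> X * (of_nat l + 1)) + \<alpha> T"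
    using T finite_transversals by (simp add: sum.distrib)
  finally have "(\<Sum>X\<in>\<S>. \<alpha> X * (of_nat l + 1)) + \<alpha> T + (\<Sum>A\<in>\<A>. \<alpha> A) = 0"
    using sum_card_Int_eq_0[of T] T transversal_subset card_transversal_Int_part by simp
  then show ?thesis
    by (simp add: algebra_simps add_eq_0_iff)
qed

lemma coeffs_transversals_eq: "S \<in> \<S> \<Longrightarrow> T \<in> \<S> \<Longrightarrow> \<alpha> S = \<alpha> T"
  using coeff_transversal_eq by presburger

lemma coeff_part_eq_0:
  assumes A: "A \<in> \<A>" and zero: "\<And>S. S \<in> \<S> \<Longrightarrow> \<alpha> S = 0"
  shows "\<alpha> A = 0"
proof -
  obtain v where v: "v \<in> A"
    using part_nonempty A by blast
  have "(\<Sum>X\<in>\<A>. \<alpha> X * charvec X v) = \<alpha> A * charvec A v"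
    using A v by (intro sum_parts_eq_single) (auto simp: charvec_def)
  moreover have "(\<Sum>X\<in>\<S> \<union> \<A>. \<alpha> X * charvec X v) = 0"
    using dependency A v by blast
  ultimately show ?thesis
    using zero v
    by (simp add: sum.union_disjoint finite_transversals finite_parts transversals_Int_parts charvec_def)
qed

lemma coeff_part_eq_1:
  assumes A: "A \<in> \<A>" and one: "\<And>S. S \<in> \<S> \<Longrightarrow> \<alpha> S = 1"
  shows "\<alpha> A = 1"
proof -
  have "(\<Sum>X\<in>\<S>. \<alpha> X * of_nat (card (A \<inter> X))) = of_nat (card \<S>)"
    using one card_transversal_Int_part A by (simp add: Int_commute)
  also have "\<dots> = 1"
    using odd_card_transversals by (simp add: of_nat_bit_eq_of_bool)
  finally have "1 + (\<Sum>X\<in>\<A>. \<alpha> X * of_nat (card (A \<inter> X))) = 0"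
    using sum_card_Int_eq_0[of A] A by auto
  moreover have "(\<Sum>X\<in>\<A>. \<alpha> X * of_nat (card (A \<inter> X))) = \<alpha> A * of_nat (card (A \<inter> A))"
    using A by (intro sum_parts_eq_single) auto
  ultimately have "\<alpha> A \<noteq> 0"
    by (metis add.right_neutral mult_zero_left zero_neq_one)
  then show ?thesis by simp
qed

lemma coeff_part_eq_transversal:
  assumes "A \<in> \<A>" and "T \<in> \<S>"
  shows "\<alpha> A = \<alpha> T"
proof (cases "\<alpha> T = 0")
  case True
  then show ?thesis
    using assms coeff_part_eq_0 coeffs_transversals_eq by metis
next
  case False
  then show ?thesis
    using assms coeff_part_eq_1 coeffs_transversals_eq by (metis bit_not_zero_iff)
qed

theorem nontrivial_dependency_all_ones:
  assumes "\<exists>X\<in>\<S> \<union> \<A>. \<alpha> X \<noteq> 0"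
  shows "\<forall>X\<in>\<S> \<union> \<A>. \<alpha> X = 1"
proof -
  obtain T where T: "T \<in> \<S>"
    using odd_card_transversals by fastforce
  have "\<alpha> X = \<alpha> T" if "X \<in> \<S> \<union> \<A>" for X
    using that T coeffs_transversals_eq coeff_part_eq_transversal by blast
  with assms show ?thesis by auto
qed

end

theorem lemma3p2:
  fixes l :: nat
    and A :: "nat \<Rightarrow> 'a set"
    and V :: "'a set"
    and \<A> :: "'a set set"
    and \<S> :: "'a set set"
    and \<alpha> :: "'a set \<Rightarrow> bit"
  assumes l2: "l \<ge> 2"
    and A_fin: "\<forall>i\<in>{1..l}. finite (A i)"
    and A_ne: "\<forall>i\<in>{1..l}. A i \<noteq> {}"
    and A_disj: "\<forall>i\<in>{1..l}. \<forall>j\<in>{1..l}. i \<noteq> j \<longrightarrow> A i \<inter> A j = {}"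
    and V_def: "V = (\<Union>i\<in>{1..l}. A i)"
    and \<A>_def: "\<A> = A ` {1..l}"
    and S_sub: "\<forall>S\<in>\<S>. S \<subseteq> V \<and> card S = l"
    and S_trans: "\<forall>S\<in>\<S>. \<forall>i\<in>{1..l}. card (S \<inter> A i) = 1"
    and S_odd: "\<forall>S\<in>\<S>. \<forall>T\<in>\<S>. S \<noteq> T \<longrightarrow> odd (card (S - T))"
    and card_odd: "odd (card \<S>)"
    and dep: "\<forall>v\<in>V. (\<Sum>X\<in>\<S> \<union> \<A>. \<alpha> X * charvec X v) = 0"
    and nontriv: "\<exists>X\<in>\<S> \<union> \<A>. \<alpha> X \<noteq> 0"
  shows "\<forall>X\<in>\<S> \<union> \<A>. \<alpha> X = 1"
proof -
  have idx: "1 \<in> {1..l}" "2 \<in> {1..l}"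
    using l2 by auto
  then have "A 1 \<inter> A 2 = {}" "A 1 \<noteq> {}"
    using A_disj A_ne by auto
  then have "A 1 \<noteq> A 2"
    by auto
  then have two_parts: "2 \<le> card \<A>"
    using card_mono[of \<A> "{A 1, A 2}"] idx unfolding \<A>_def by simp
  have disjoint: "pairwise disjnt \<A>"
    using A_disj unfolding \<A>_def pairwise_image by (auto simp: pairwise_def disjnt_def)
  have parts: "finite \<A>" "\<And>X. X \<in> \<A> \<Longrightarrow> finite X" "\<And>X. X \<in> \<A> \<Longrightarrow> X \<noteq> {}"
    "\<And>S X. S \<in> \<S> \<Longrightarrow> X \<in> \<A> \<Longrightarrow> card (S \<inter> X) = 1"
    using A_fin A_ne S_trans unfolding \<A>_def by auto
  have V: "V = \<Union>\<A>"
    unfolding V_def \<A>_def by simp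
  interpret transversal_dependency \<A> \<S> l \<alpha>
    by unfold_locales (use two_parts disjoint parts S_sub S_odd card_odd dep in \<open>auto simp: V\<close>)
  show ?thesis
    using nontriv nontrivial_dependency_all_ones by blast
qed

end
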